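(* Let $T_{a_1\dots a_r}$ be a rank-$r$ tensor and $i\in\{1,\dots,r\}$. Then $(T\,{}_i\!\times_i T)=0$ if and only if there exist a null vector $k$ (or $T=0$) and a rank-$(r-1)$ tensor $t$ such that $T_{a_1\dots a_r}=k_{a_i}\,t_{a_1\dots a_{i-1}a_{i+1}\dots a_r}$.
   Context: Lorentzian metric of signature $(+,-,\dots,-)$; null: $k\ne0$, $k\cdot k=0$. $(T\,{}_i\!\times_i T)_{a_1\dots a_{2r-2}}$ denotes the tensor obtained from $T\otimes T$ by contracting the $i$-th index of the first factor with the $i$-th index of the second factor, all other indices kept in order: $T_{a_1\dots a_{i-1}ba_i\dots a_{r-1}}T_{a_r\dots a_{r+i-2}}{}^{b}{}_{a_{r+i-1}\dots a_{2r-2}}$. *)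

theory Defs
  imports Complex_Main
begin

text \<open>Tensors on an n-dimensional real space with the Minkowski metric
  diag(+1,-1,...,-1) in a fixed orthonormal basis (index 0 = time).
  A rank-r tensor is given by its components (all indices down) as a
  function on index lists; only lists of length r with entries < n matter.\<close>

definition eta :: "nat \<Rightarrow> real" where
  "eta a = (if a = 0 then 1 else -1)"

definition valid_idx :: "nat \<Rightarrow> nat \<Rightarrow> nat list \<Rightarrow> bool" where
  "valid_idx n r as \<longleftrightarrow> length as = r \<and> (\<forall>a\<in>set as. a < n)"

definition ins_at :: "nat \<Rightarrow> nat \<Rightarrow> nat list \<Rightarrow> nat list" where
  "ins_at j b xs = take j xs @ b # drop j xs"

text \<open>(T i-times-i T) for a rank-r tensor T and 1 <= i <= r, evaluated at a
  list of 2r-2 indices: the first r-1 go to the first factor, the rest to the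
  second, and the contracted index b sits at position i in both factors
  (raised with the inverse metric, which equals eta since it is diagonal).\<close>
definition contr :: "nat \<Rightarrow> nat \<Rightarrow> nat \<Rightarrow> (nat list \<Rightarrow> real) \<Rightarrow> nat list \<Rightarrow> real" where
  "contr n r i T as =
     (\<Sum>b<n. eta b * T (ins_at (i - 1) b (take (r - 1) as))
                   * T (ins_at (i - 1) b (drop (r - 1) as)))"

definition mdot :: "nat \<Rightarrow> (nat \<Rightarrow> real) \<Rightarrow> (nat \<Rightarrow> real) \<Rightarrow> real" where
  "mdot n k l = (\<Sum>a<n. eta a * k a * l a)"

definition null_vec :: "nat \<Rightarrow> (nat \<Rightarrow> real) \<Rightarrow> bool" where
  "null_vec n k \<longleftrightarrow> (\<exists>a<n. k a \<noteq> 0) \<and> mdot n k k = 0"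

end

theory Submission
  imports Defs
begin

text \<open>Fixing all indices of \<open>T\<close> except the \<open>i\<close>-th yields a family of vectors
  \<open>v\<^sub>c = T(c with b inserted at slot i)\<close>, indexed by rank-\<open>(r-1)\<close> multi-indices \<open>c\<close>,
  and \<open>(T \<^sub>i\<times>\<^sub>i T)(c, d)\<close> is the Minkowski product \<open>v\<^sub>c \<cdot> v\<^sub>d\<close>. So the contraction vanishes
  iff the family spans a totally null subspace. In Lorentzian signature such a
  subspace has dimension at most one: a null vector \<open>w\<close> with \<open>w\<^sub>0 = 0\<close> vanishes, and for
  orthogonal null \<open>u, v\<close> with \<open>u\<^sub>0 \<noteq> 0\<close> the vector \<open>v\<^sub>0 u - u\<^sub>0 v\<close> is such a \<open>w\<close>. Hence all
  \<open>v\<^sub>c\<close> are multiples \<open>t\<^sub>c k\<close> of one null vector \<open>k\<close>, which is the claimed factorisation.\<close>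

lemma ins_at_nth: "j \<le> length c \<Longrightarrow> ins_at j b c ! j = b"
  by (simp add: ins_at_def nth_append)

lemma take_drop_ins_at: "j \<le> length c \<Longrightarrow> take j (ins_at j b c) @ drop (Suc j) (ins_at j b c) = c"
  by (simp add: ins_at_def)

lemma ins_at_nth_take_drop: "j < length as \<Longrightarrow> ins_at j (as ! j) (take j as @ drop (Suc j) as) = as"
  by (simp add: ins_at_def id_take_nth_drop[symmetric])

lemma valid_idx_add_iff:
  "valid_idx n (m + m') as \<longleftrightarrow> (\<exists>c d. as = c @ d \<and> valid_idx n m c \<and> valid_idx n m' d)"
proof
  assume "valid_idx n (m + m') as"
  then show "\<exists>c d. as = c @ d \<and> valid_idx n m c \<and> valid_idx n m' d"
    unfolding valid_idx_def
    by (intro exI[of _ "take m as"] exI[of _ "drop m as"]) (auto dest: in_set_takeD in_set_dropD)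
qed (auto simp: valid_idx_def)

lemma all_valid_idx_add_iff:
  "(\<forall>as. valid_idx n (m + m') as \<longrightarrow> P as) \<longleftrightarrow>
   (\<forall>c d. valid_idx n m c \<longrightarrow> valid_idx n m' d \<longrightarrow> P (c @ d))"
  by (auto simp: valid_idx_add_iff)

lemma mdot_self_zero_time_zero:
  assumes "mdot n w w = 0" and "w 0 = 0"
  shows "\<forall>a<n. w a = 0"
proof -
  have "(\<Sum>a<n. eta a * w a * w a) = - (\<Sum>a<n. (w a)\<^sup>2)"
    unfolding sum_negf[symmetric] by (rule sum.cong) (auto simp: eta_def assms(2) power2_eq_square)
  with assms(1) have "(\<Sum>a<n. (w a)\<^sup>2) = 0"
    unfolding mdot_def by simp
  then show ?thesis by (simp add: sum_nonneg_eq_0_iff)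
qed

lemma mdot_combination:
  "mdot n (\<lambda>a. x * u a + y * v a) (\<lambda>a. x * u a + y * v a)
     = x\<^sup>2 * mdot n u u + 2 * x * y * mdot n u v + y\<^sup>2 * mdot n v v"
  unfolding mdot_def
  by (simp add: sum.distrib sum_distrib_left algebra_simps power2_eq_square)

lemma orthogonal_null_proportional:
  assumes "mdot n u u = 0" "mdot n v v = 0" "mdot n u v = 0" "u 0 \<noteq> 0"
  shows "\<forall>a<n. v a = v 0 / u 0 * u a"
proof -
  define w where "w a = v 0 * u a + (- u 0) * v a" for a
  have "mdot n w w = 0"
    using assms unfolding w_def mdot_combination by simp
  moreover have "w 0 = 0" by (simp add: w_def)
  ultimately have "\<forall>a<n. w a = 0" by (rule mdot_self_zero_time_zero)
  with assms(4) show ?thesis by (auto simp: w_def field_simps)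
qed

lemma totally_null_family_iff:
  fixes F :: "'c \<Rightarrow> nat \<Rightarrow> real"
  shows "(\<forall>c\<in>C. \<forall>d\<in>C. mdot n (F c) (F d) = 0) \<longleftrightarrow>
         (\<forall>c\<in>C. \<forall>a<n. F c a = 0) \<or>
         (\<exists>k s. null_vec n k \<and> (\<forall>c\<in>C. \<forall>a<n. F c a = k a * s c))"
proof
  assume orth: "\<forall>c\<in>C. \<forall>d\<in>C. mdot n (F c) (F d) = 0"
  show "(\<forall>c\<in>C. \<forall>a<n. F c a = 0) \<or> (\<exists>k s. null_vec n k \<and> (\<forall>c\<in>C. \<forall>a<n. F c a = k a * s c))"
  proof (cases "\<forall>c\<in>C. \<forall>a<n. F c a = 0")
    case False
    then obtain c0 a0 where c0: "c0 \<in> C" and "a0 < n" "F c0 a0 \<noteq> 0" by blast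
    define k where "k = F c0"
    have kk: "mdot n k k = 0" using orth c0 by (simp add: k_def)
    have k_nonzero: "\<exists>a<n. k a \<noteq> 0" using \<open>a0 < n\<close> \<open>F c0 a0 \<noteq> 0\<close> by (auto simp: k_def)
    with kk have "k 0 \<noteq> 0" using mdot_self_zero_time_zero by blast
    then have "\<forall>c\<in>C. \<forall>a<n. F c a = k a * (F c 0 / k 0)"
      using orthogonal_null_proportional[OF kk] orth c0 by (simp add: k_def mult.commute)
    moreover have "null_vec n k" using kk k_nonzero by (simp add: null_vec_def)
    ultimately show ?thesis by (intro disjI2 exI[of _ k] exI[of _ "\<lambda>c. F c 0 / k 0"] conjI)
  qed simp
next
  have "mdot n (F c) (F d) = 0"
    if "\<forall>a<n. F c a = k a * s c" "\<forall>a<n. F d a = k a * s d" "mdot n k k = 0" for c d k s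
  proof -
    have "mdot n (F c) (F d) = s c * s d * mdot n k k"
      unfolding mdot_def sum_distrib_left using that by (simp add: algebra_simps)
    with that show ?thesis by simp
  qed
  then show "(\<forall>c\<in>C. \<forall>a<n. F c a = 0) \<or> (\<exists>k s. null_vec n k \<and> (\<forall>c\<in>C. \<forall>a<n. F c a = k a * s c))
             \<Longrightarrow> \<forall>c\<in>C. \<forall>d\<in>C. mdot n (F c) (F d) = 0"
    unfolding null_vec_def by (auto simp: mdot_def)
qed

definition slot_vec :: "nat \<Rightarrow> (nat list \<Rightarrow> real) \<Rightarrow> nat list \<Rightarrow> nat \<Rightarrow> real" where
  "slot_vec j T c = (\<lambda>b. T (ins_at j b c))"

lemma contr_append_eq_mdot:
  assumes "length c = m"
  shows "contr n (Suc m) (Suc j) T (c @ d) = mdot n (slot_vec j T c) (slot_vec j T d)"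
  using assms unfolding contr_def mdot_def slot_vec_def by (simp add: mult.assoc)

lemma all_valid_idx_Suc_eq_iff:
  assumes "j \<le> m"
  shows "(\<forall>as. valid_idx n (Suc m) as \<longrightarrow> T as = f (as ! j) (take j as @ drop (Suc j) as)) \<longleftrightarrow>
         (\<forall>c\<in>{c. valid_idx n m c}. \<forall>b<n. slot_vec j T c b = f b c)"
proof
  assume T: "\<forall>as. valid_idx n (Suc m) as \<longrightarrow> T as = f (as ! j) (take j as @ drop (Suc j) as)"
  show "\<forall>c\<in>{c. valid_idx n m c}. \<forall>b<n. slot_vec j T c b = f b c"
  proof (intro ballI allI impI)
    fix c b assume "c \<in> {c. valid_idx n m c}" "b < n"
    then have "valid_idx n (Suc m) (ins_at j b c)" and "j \<le> length c"
      using assms unfolding valid_idx_def ins_at_def by (auto dest: in_set_takeD in_set_dropD)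
    with T show "slot_vec j T c b = f b c"
      by (simp add: slot_vec_def ins_at_nth take_drop_ins_at)
  qed
next
  assume slot: "\<forall>c\<in>{c. valid_idx n m c}. \<forall>b<n. slot_vec j T c b = f b c"
  show "\<forall>as. valid_idx n (Suc m) as \<longrightarrow> T as = f (as ! j) (take j as @ drop (Suc j) as)"
  proof (intro allI impI)
    fix as assume as: "valid_idx n (Suc m) as"
    then have "valid_idx n m (take j as @ drop (Suc j) as)" and "as ! j < n" "j < length as"
      using assms unfolding valid_idx_def by (auto dest: in_set_takeD in_set_dropD)
    with slot have "slot_vec j T (take j as @ drop (Suc j) as) (as ! j)
                    = f (as ! j) (take j as @ drop (Suc j) as)"
      by blast
    with \<open>j < length as\<close> show "T as = f (as ! j) (take j as @ drop (Suc j) as)"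
      by (simp add: slot_vec_def ins_at_nth_take_drop)
  qed
qed

theorem mainTheorem14:
  fixes n r i :: nat and T :: "nat list \<Rightarrow> real"
  assumes "2 \<le> n" and "1 \<le> i" and "i \<le> r"
  shows "(\<forall>as. valid_idx n (2 * r - 2) as \<longrightarrow> contr n r i T as = 0) \<longleftrightarrow>
         ((\<forall>as. valid_idx n r as \<longrightarrow> T as = 0) \<or>
          (\<exists>k t. null_vec n k \<and>
             (\<forall>as. valid_idx n r as \<longrightarrow>
                T as = k (as ! (i - 1)) * t (take (i - 1) as @ drop i as))))"
proof -
  obtain j where i: "i = Suc j" using assms(2) by (cases i) auto
  obtain m where r: "r = Suc m" and "j \<le> m" using assms(3) i by (cases r) auto
  let ?C = "{c. valid_idx n m c}"
  have "2 * r - 2 = m + m" using r by simp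
  then have "(\<forall>as. valid_idx n (2 * r - 2) as \<longrightarrow> contr n r i T as = 0) \<longleftrightarrow>
             (\<forall>c d. valid_idx n m c \<longrightarrow> valid_idx n m d \<longrightarrow> contr n r i T (c @ d) = 0)"
    by (simp only: all_valid_idx_add_iff)
  also have "\<dots> \<longleftrightarrow> (\<forall>c\<in>?C. \<forall>d\<in>?C. mdot n (slot_vec j T c) (slot_vec j T d) = 0)"
    by (auto simp: r i valid_idx_def contr_append_eq_mdot)
  finally have contr_iff: "(\<forall>as. valid_idx n (2 * r - 2) as \<longrightarrow> contr n r i T as = 0) \<longleftrightarrow>
      (\<forall>c\<in>?C. \<forall>d\<in>?C. mdot n (slot_vec j T c) (slot_vec j T d) = 0)" .
  have slot_iff: "(\<forall>as. valid_idx n r as \<longrightarrow> T as = f (as ! (i - 1)) (take (i - 1) as @ drop i as))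
      \<longleftrightarrow> (\<forall>c\<in>?C. \<forall>b<n. slot_vec j T c b = f b c)" for f
    unfolding r i diff_Suc_1 using \<open>j \<le> m\<close> by (rule all_valid_idx_Suc_eq_iff)
  show ?thesis
    by (simp only: contr_iff totally_null_family_iff slot_iff[symmetric])
qed

end
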